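(* Let $A\subseteq\mathbb{R}^n$ be finite (Euclidean metric) and $\beta>0$. For all $r,k>0$, $$\mathrm{DCr}^\beta_{r,k}(A)\subseteq\mathrm{Cr}^\beta_{r,k}(A)\subseteq\mathrm{DCr}^\beta_{(2\beta+1)r,k}(A).$$
   Context: $d$ is the Euclidean metric and $\bar B_d(x,r)=\{y:d(x,y)\le r\}$. For finite $A\subseteq\mathbb{R}^n$, $k>0$, $x\in\mathbb{R}^n$, the $k$-core distance $\mathrm{core}^A_k(x)$ is the distance from $x$ to its $\lceil k\rceil$-th nearest neighbor in $A$ (each point of $A$ counted once, $x$ itself counting if $x\in A$); equivalently $\min\{r\ge0:|\bar B_d(x,r)\cap A|\ge k\}$, and $\infty$ if $k>|A|$. For $\beta>0$: $\Lambda^\beta_k(a,x)=\max\{\beta\,\mathrm{core}^A_k(a),d(a,x)\}$, $B^\beta_{r,k}(a)=\{x:\Lambda^\beta_k(a,x)\le r\}$, core bifiltration $\mathrm{Cr}^\beta_{r,k}(A)=\bigcup_{a\in A}B^\beta_{r,k}(a)$. The Voronoi cell of $a\in A$ is $\mathrm{Vor}_A(a)=\{x\in\mathbb{R}^n: d(a,x)\le d(a',x)\text{ for all }a'\in A\}$. The Delaunay core bifiltration is $\mathrm{DCr}^\beta_{r,k}(A)=\bigcup_{a\in A}\big(B^\beta_{r,k}(a)\cap\mathrm{Vor}_A(a)\big)$. *)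

theory Defs
  imports "HOL-Analysis.Analysis" "HOL-Library.Extended_Real"
begin

text \<open>k-core distance: least r \<ge> 0 such that the closed ball of radius r about x
  contains at least k points of A; infinity if no such r exists (i.e. k > card A).\<close>
definition core_dist :: "('a::metric_space) set \<Rightarrow> real \<Rightarrow> 'a \<Rightarrow> ereal" where
  "core_dist A k x = Inf {ereal r | r. r \<ge> 0 \<and> real (card (cball x r \<inter> A)) \<ge> k}"

definition Lambda :: "('a::metric_space) set \<Rightarrow> real \<Rightarrow> real \<Rightarrow> 'a \<Rightarrow> 'a \<Rightarrow> ereal" where
  "Lambda A \<beta> k a x = max (ereal \<beta> * core_dist A k a) (ereal (dist a x))"

definition core_ball :: "('a::metric_space) set \<Rightarrow> real \<Rightarrow> real \<Rightarrow> real \<Rightarrow> 'a \<Rightarrow> 'a set" where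
  "core_ball A \<beta> r k a = {x. Lambda A \<beta> k a x \<le> ereal r}"

definition core_bifiltration :: "('a::metric_space) set \<Rightarrow> real \<Rightarrow> real \<Rightarrow> real \<Rightarrow> 'a set" where
  "core_bifiltration A \<beta> r k = (\<Union>a\<in>A. core_ball A \<beta> r k a)"

definition voronoi_cell :: "('a::metric_space) set \<Rightarrow> 'a \<Rightarrow> 'a set" where
  "voronoi_cell A a = {x. \<forall>a'\<in>A. dist a x \<le> dist a' x}"

definition delaunay_core_bifiltration :: "('a::metric_space) set \<Rightarrow> real \<Rightarrow> real \<Rightarrow> real \<Rightarrow> 'a set" where
  "delaunay_core_bifiltration A \<beta> r k = (\<Union>a\<in>A. core_ball A \<beta> r k a \<inter> voronoi_cell A a)"

end

theory Submission
  imports Defs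
begin

text \<open>For the second, a point x covered by the ball of a
  is assigned to its nearest sample a', which lies within distance 2r of a. Since the core
  distance is 1-Lipschitz, \<beta> core(a') \<le> \<beta> core(a) + 2\<beta>r \<le> (2\<beta>+1)r, and d(a',x) \<le> d(a,x) \<le> r,
  so x lies in the ball of a' at scale (2\<beta>+1)r and in the Voronoi cell of a'.\<close>

lemma core_dist_le_add_dist:
  fixes A :: "('a::metric_space) set"
  assumes "finite A"
  shows "core_dist A k b \<le> core_dist A k a + ereal (dist a b)"
proof -
  define radii where "radii c = {ereal r | r. r \<ge> 0 \<and> real (card (cball c r \<inter> A)) \<ge> k}" for c
  have core: "core_dist A k c = Inf (radii c)" for c
    unfolding core_dist_def radii_def by simp
  show ?thesis
  proof (cases "radii a = {}")
    case True
    then show ?thesis by (simp add: core top_ereal_def)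
  next
    case False
    have "Inf (radii a) + ereal (dist a b) = (INF s\<in>radii a. s + ereal (dist a b))"
      using False by (subst INF_ereal_add_left) (auto simp: radii_def)
    also have "Inf (radii b) \<le> \<dots>"
    proof (rule INF_greatest)
      fix s assume "s \<in> radii a"
      then obtain r where r: "s = ereal r" "r \<ge> 0" "real (card (cball a r \<inter> A)) \<ge> k"
        unfolding radii_def by auto
      have "cball a r \<subseteq> cball b (r + dist a b)"
        by metric
      then have "card (cball a r \<inter> A) \<le> card (cball b (r + dist a b) \<inter> A)"
        using assms by (intro card_mono) auto
      then have "ereal (r + dist a b) \<in> radii b"
        unfolding radii_def using r by force
      then show "Inf (radii b) \<le> s + ereal (dist a b)"
        using r by (auto intro: Inf_lower)
    qed
    finally show ?thesis by (simp add: core)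
  qed
qed

lemma ex_voronoi_cell_mem:
  fixes A :: "('a::metric_space) set"
  assumes "finite A" and "A \<noteq> {}"
  obtains a where "a \<in> A" and "x \<in> voronoi_cell A a"
proof -
  obtain a where "is_arg_min (\<lambda>y. dist y x) (\<lambda>y. y \<in> A) a"
    using ex_is_arg_min_if_finite[OF assms] by blast
  then show ?thesis
    using that unfolding is_arg_min_def voronoi_cell_def by force
qed

lemma delaunay_core_bifiltration_subset:
  "delaunay_core_bifiltration A \<beta> r k \<subseteq> core_bifiltration A \<beta> r k"
  unfolding delaunay_core_bifiltration_def core_bifiltration_def by blast

lemma core_ball_mem_voronoi_cell:
  fixes A :: "('a::metric_space) set"
  assumes "finite A" and "\<beta> \<ge> 0" and "a \<in> A"
    and "x \<in> core_ball A \<beta> r k a" and "x \<in> voronoi_cell A a'"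
  shows "x \<in> core_ball A \<beta> ((2 * \<beta> + 1) * r) k a'"
proof -
  have core_a: "ereal \<beta> * core_dist A k a \<le> ereal r" and dist_a: "dist a x \<le> r"
    using assms(4) unfolding core_ball_def Lambda_def by auto
  have dist_a': "dist a' x \<le> r"
    using assms(3,5) dist_a unfolding voronoi_cell_def by (auto simp: dist_commute)
  have "dist a a' \<le> 2 * r"
    using dist_triangle[of a a' x] dist_a dist_a' by (simp add: dist_commute)
  have "ereal \<beta> * core_dist A k a' \<le> ereal \<beta> * (core_dist A k a + ereal (dist a a'))"
    using core_dist_le_add_dist[OF assms(1)] assms(2) by (intro ereal_mult_left_mono) auto
  also have "\<dots> = ereal \<beta> * core_dist A k a + ereal (\<beta> * dist a a')"
    by (subst ereal_distrib_left) auto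
  also have "\<dots> \<le> ereal r + ereal (\<beta> * (2 * r))"
    using core_a \<open>dist a a' \<le> 2 * r\<close> assms(2) by (intro add_mono) (auto intro: mult_left_mono)
  also have "\<dots> = ereal ((2 * \<beta> + 1) * r)"
    by (simp add: algebra_simps)
  finally have "ereal \<beta> * core_dist A k a' \<le> ereal ((2 * \<beta> + 1) * r)" .
  moreover have "dist a' x \<le> (2 * \<beta> + 1) * r"
  proof -
    have "0 \<le> r"
      using dist_a zero_le_dist[of a x] by linarith
    then have "0 \<le> \<beta> * (2 * r)"
      using assms(2) by simp
    then show ?thesis
      using dist_a' by (simp add: algebra_simps)
  qed
  ultimately show ?thesis
    unfolding core_ball_def Lambda_def by simp
qed

lemma core_bifiltration_subset_delaunay:
  fixes A :: "('a::metric_space) set"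
  assumes "finite A" and "\<beta> \<ge> 0"
  shows "core_bifiltration A \<beta> r k \<subseteq> delaunay_core_bifiltration A \<beta> ((2 * \<beta> + 1) * r) k"
proof
  fix x assume "x \<in> core_bifiltration A \<beta> r k"
  then obtain a where "a \<in> A" and "x \<in> core_ball A \<beta> r k a"
    unfolding core_bifiltration_def by auto
  moreover obtain a' where "a' \<in> A" and "x \<in> voronoi_cell A a'"
    using ex_voronoi_cell_mem[OF assms(1)] \<open>a \<in> A\<close> by blast
  ultimately show "x \<in> delaunay_core_bifiltration A \<beta> ((2 * \<beta> + 1) * r) k"
    using core_ball_mem_voronoi_cell[OF assms] unfolding delaunay_core_bifiltration_def by blast
qed

theorem mainTheorem5:
  fixes A :: "(real ^ 'n) set" and \<beta> r k :: real
  assumes "finite A" and "\<beta> > 0" and "r > 0" and "k > 0"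
  shows "delaunay_core_bifiltration A \<beta> r k \<subseteq> core_bifiltration A \<beta> r k
    \<and> core_bifiltration A \<beta> r k \<subseteq> delaunay_core_bifiltration A \<beta> ((2 * \<beta> + 1) * r) k"
  using delaunay_core_bifiltration_subset core_bifiltration_subset_delaunay[OF assms(1)] assms(2)
  by simp

end
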